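(* (i) Let $L,L'$ be simplicial complexes and $\varphi_i,\varphi'_i: L\to L'$ simplicial maps for $i=1,\dots,m$. If $\varphi_i\sim\varphi'_i$ for each $i$, then $\mathrm{SD}(\varphi_1,\dots,\varphi_m)=\mathrm{SD}(\varphi'_1,\dots,\varphi'_m)$. (ii) Let $\varphi_i: L\to L'$ be simplicial maps for $i=1,\dots,m$. If $L$ or $L'$ is strongly collapsible, then $\mathrm{SD}(\varphi_1,\dots,\varphi_m)=0$.
   Context: Simplicial complexes are abstract simplicial complexes; simplicial maps send simplices to simplices. Simplicial maps $f,g: K\to K'$ are contiguous if $f(\sigma)\cup g(\sigma)$ is a simplex of $K'$ for every simplex $\sigma$ of $K$; $f\sim g$ (same contiguity class) if there is a finite chain $f=f_0,\dots,f_n=g$ of simplicial maps with consecutive ones contiguous. For simplicial maps $\varphi_1,\dots,\varphi_m: K\to K'$, the higher contiguity distance $\mathrm{SD}(\varphi_1,\dots,\varphi_m)$ is the least $n\ge0$ such that $K$ is a union of subcomplexes $K_0,\dots,K_n$ with $\varphi_i|_{K_k}\sim\varphi_j|_{K_k}$ for all $i,j\in\{1,\dots,m\}$ and $k=0,\dots,n$. A simplicial complex $L$ is strongly collapsible if it has the same strong homotopy type as a single vertex $v$, i.e. there are simplicial maps $f: L\to\{v\}$, $g:\{v\}\to L$ with $f\circ g\sim 1$ and $g\circ f\sim 1_L$. Complexes are assumed edge-path connected. *)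

theory Defs
  imports Main "HOL-Library.Extended_Nat"
begin

definition simplicial_complex :: "'a set set \<Rightarrow> bool" where
  "simplicial_complex K \<longleftrightarrow>
     (\<forall>\<sigma>\<in>K. finite \<sigma> \<and> \<sigma> \<noteq> {}) \<and>
     (\<forall>\<sigma>\<in>K. \<forall>\<tau>. \<tau> \<subseteq> \<sigma> \<and> \<tau> \<noteq> {} \<longrightarrow> \<tau> \<in> K)"

definition vertices :: "'a set set \<Rightarrow> 'a set" where
  "vertices K = \<Union>K"

definition edge_path_connected :: "'a set set \<Rightarrow> bool" where
  "edge_path_connected K \<longleftrightarrow>
     (\<forall>v\<in>vertices K. \<forall>w\<in>vertices K. (\<lambda>x y. {x, y} \<in> K)\<^sup>*\<^sup>* v w)"

definition subcomplex :: "'a set set \<Rightarrow> 'a set set \<Rightarrow> bool" where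
  "subcomplex L K \<longleftrightarrow> simplicial_complex L \<and> L \<subseteq> K"

text \<open>A simplicial map K -> K' (only its values on vertices of K matter).\<close>
definition simplicial_map :: "'a set set \<Rightarrow> 'b set set \<Rightarrow> ('a \<Rightarrow> 'b) \<Rightarrow> bool" where
  "simplicial_map K K' f \<longleftrightarrow> (\<forall>\<sigma>\<in>K. f ` \<sigma> \<in> K')"

definition contiguous :: "'a set set \<Rightarrow> 'b set set \<Rightarrow> ('a \<Rightarrow> 'b) \<Rightarrow> ('a \<Rightarrow> 'b) \<Rightarrow> bool" where
  "contiguous K K' f g \<longleftrightarrow> simplicial_map K K' f \<and> simplicial_map K K' g \<and>
     (\<forall>\<sigma>\<in>K. f ` \<sigma> \<union> g ` \<sigma> \<in> K')"

definition contiguity_class :: "'a set set \<Rightarrow> 'b set set \<Rightarrow> ('a \<Rightarrow> 'b) \<Rightarrow> ('a \<Rightarrow> 'b) \<Rightarrow> bool" where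
  "contiguity_class K K' f g \<longleftrightarrow> simplicial_map K K' f \<and> (contiguous K K')\<^sup>*\<^sup>* f g"

definition SD_cover :: "'a set set \<Rightarrow> 'b set set \<Rightarrow> nat \<Rightarrow> (nat \<Rightarrow> 'a \<Rightarrow> 'b) \<Rightarrow> nat \<Rightarrow> bool" where
  "SD_cover K K' m \<phi> n \<longleftrightarrow>
     (\<exists>Ks :: nat \<Rightarrow> 'a set set.
        (\<forall>k\<le>n. subcomplex (Ks k) K) \<and> K = (\<Union>k\<le>n. Ks k) \<and>
        (\<forall>i\<in>{1..m}. \<forall>j\<in>{1..m}. \<forall>k\<le>n. contiguity_class (Ks k) K' (\<phi> i) (\<phi> j)))"

definition SD :: "'a set set \<Rightarrow> 'b set set \<Rightarrow> nat \<Rightarrow> (nat \<Rightarrow> 'a \<Rightarrow> 'b) \<Rightarrow> enat" where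
  "SD K K' m \<phi> = (if \<exists>n. SD_cover K K' m \<phi> n then enat (LEAST n. SD_cover K K' m \<phi> n) else \<infinity>)"

text \<open>Strongly collapsible: same strong homotopy type as a single vertex complex {{v}}.\<close>
definition strongly_collapsible :: "'a set set \<Rightarrow> bool" where
  "strongly_collapsible L \<longleftrightarrow>
     (\<exists>(v::'a) (f::'a \<Rightarrow> 'a) (g::'a \<Rightarrow> 'a).
        simplicial_map L {{v}} f \<and> simplicial_map {{v}} L g \<and>
        contiguity_class {{v}} {{v}} (f \<circ> g) id \<and> contiguity_class L L (g \<circ> f) id)"

end

theory Submission
  imports Defs
begin

text \<open>Contiguity classes form an equivalence relation that survives restriction to
  subcomplexes, so if each \<open>\<phi> i\<close> is in the class of \<open>\<phi>' i\<close>, a cover is admissible for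
  \<open>\<phi>\<close> exactly when it is admissible for \<open>\<phi>'\<close>; this gives (i). For (ii), composing with
  a strong homotopy equivalence to a point puts every \<open>\<phi> i\<close> in the class of a constant
  map. Two constant maps whose values span an edge are contiguous, so by edge-path
  connectedness of \<open>L'\<close> all constant maps lie in one class; hence the single
  subcomplex \<open>L\<close> is already an admissible cover.\<close>

lemma rtranclp_map:
  assumes "\<And>x y. r x y \<Longrightarrow> s (F x) (F y)" and "r\<^sup>*\<^sup>* x y"
  shows "s\<^sup>*\<^sup>* (F x) (F y)"
  using assms(2) by induction (auto intro: rtranclp.rtrancl_into_rtrancl assms(1))

lemma simplicial_complex_nonempty_simplex:
  "simplicial_complex K \<Longrightarrow> \<sigma> \<in> K \<Longrightarrow> \<sigma> \<noteq> {}"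
  by (auto simp: simplicial_complex_def)

lemma simplicial_complex_face:
  "simplicial_complex K \<Longrightarrow> \<sigma> \<in> K \<Longrightarrow> \<tau> \<subseteq> \<sigma> \<Longrightarrow> \<tau> \<noteq> {} \<Longrightarrow> \<tau> \<in> K"
  unfolding simplicial_complex_def by blast

lemma simplicial_complex_vertex_simplex:
  "simplicial_complex K \<Longrightarrow> v \<in> vertices K \<Longrightarrow> {v} \<in> K"
  unfolding vertices_def by (blast intro: simplicial_complex_face)

lemma simplicial_map_comp:
  "simplicial_map K K' f \<Longrightarrow> simplicial_map K' K'' g \<Longrightarrow> simplicial_map K K'' (g \<circ> f)"
  unfolding simplicial_map_def image_comp [symmetric] by blast

lemma simplicial_map_vertices:
  "simplicial_map K K' f \<Longrightarrow> x \<in> vertices K \<Longrightarrow> f x \<in> vertices K'"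
  unfolding simplicial_map_def vertices_def by blast

lemma simplicial_map_to_point:
  "simplicial_map K {{v}} f \<Longrightarrow> x \<in> vertices K \<Longrightarrow> f x = v"
  using simplicial_map_vertices[of K "{{v}}" f x] by (simp add: vertices_def)

lemma simplicial_map_const:
  "simplicial_complex K \<Longrightarrow> {c} \<in> K' \<Longrightarrow> simplicial_map K K' (\<lambda>_. c)"
  by (simp add: simplicial_map_def image_constant_conv simplicial_complex_nonempty_simplex)

lemma contiguous_commute: "contiguous K K' f g \<longleftrightarrow> contiguous K K' g f"
  by (auto simp: contiguous_def Un_commute)

lemma contiguous_subcomplex:
  "contiguous K K' f g \<Longrightarrow> K\<^sub>0 \<subseteq> K \<Longrightarrow> contiguous K\<^sub>0 K' f g"
  by (auto simp: contiguous_def simplicial_map_def)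

lemma contiguous_comp_left:
  "contiguous K K h h' \<Longrightarrow> simplicial_map K K' \<phi> \<Longrightarrow> contiguous K K' (\<phi> \<circ> h) (\<phi> \<circ> h')"
  unfolding contiguous_def simplicial_map_def image_comp [symmetric] image_Un [symmetric]
  by blast

lemma contiguous_comp_right:
  "contiguous K' K'' h h' \<Longrightarrow> simplicial_map K K' \<phi> \<Longrightarrow> contiguous K K'' (h \<circ> \<phi>) (h' \<circ> \<phi>)"
  unfolding contiguous_def simplicial_map_def image_comp [symmetric] by blast

lemma contiguous_eq_on_vertices:
  assumes "simplicial_map K K' f" and "\<And>x. x \<in> vertices K \<Longrightarrow> f x = g x"
  shows "contiguous K K' f g"
proof -
  have "g ` \<sigma> = f ` \<sigma>" if "\<sigma> \<in> K" for \<sigma>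
    using assms(2) that by (intro image_cong) (auto simp: vertices_def intro: sym)
  with assms(1) show ?thesis
    by (simp add: contiguous_def simplicial_map_def)
qed

lemma contiguous_const:
  assumes "simplicial_complex K" "simplicial_complex K'" and "{a, b} \<in> K'"
  shows "contiguous K K' (\<lambda>_. a) (\<lambda>_. b)"
proof -
  have "{a} \<in> K'" "{b} \<in> K'"
    using simplicial_complex_face[OF assms(2,3)] by auto
  moreover have "(\<lambda>_. a) ` \<sigma> \<union> (\<lambda>_. b) ` \<sigma> = {a, b}" if "\<sigma> \<in> K" for \<sigma>
    using simplicial_complex_nonempty_simplex[OF assms(1) that] by auto
  ultimately show ?thesis
    using assms by (simp add: contiguous_def simplicial_map_const)
qed

lemma contiguity_class_simplicial_map:
  assumes "contiguity_class K K' f g"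
  shows "simplicial_map K K' g"
proof -
  have "(contiguous K K')\<^sup>*\<^sup>* f g" and "simplicial_map K K' f"
    using assms by (simp_all add: contiguity_class_def)
  then show ?thesis
    by induction (auto simp: contiguous_def)
qed

lemma contiguity_class_sym:
  assumes "contiguity_class K K' f g"
  shows "contiguity_class K K' g f"
proof -
  have "symp (contiguous K K')"
    by (rule sympI) (simp add: contiguous_commute)
  then have "(contiguous K K')\<^sup>*\<^sup>* g f"
    using assms by (simp add: contiguity_class_def sympD[OF symp_rtranclp])
  with contiguity_class_simplicial_map[OF assms] show ?thesis
    by (simp add: contiguity_class_def)
qed

lemma contiguity_class_trans [trans]:
  "contiguity_class K K' f g \<Longrightarrow> contiguity_class K K' g h \<Longrightarrow> contiguity_class K K' f h"
  unfolding contiguity_class_def by (metis rtranclp_trans)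

lemma contiguity_class_subcomplex:
  assumes "contiguity_class K K' f g" and "K\<^sub>0 \<subseteq> K"
  shows "contiguity_class K\<^sub>0 K' f g"
proof -
  have "contiguous K K' \<le> contiguous K\<^sub>0 K'"
    using assms(2) by (auto intro: contiguous_subcomplex)
  then have "(contiguous K\<^sub>0 K')\<^sup>*\<^sup>* f g"
    using assms(1) by (auto simp: contiguity_class_def dest: rtranclp_mono)
  with assms show ?thesis
    by (auto simp: contiguity_class_def simplicial_map_def)
qed

lemma contiguity_class_comp_left:
  assumes "contiguity_class K K h h'" and "simplicial_map K K' \<phi>"
  shows "contiguity_class K K' (\<phi> \<circ> h) (\<phi> \<circ> h')"
proof -
  have "(contiguous K K')\<^sup>*\<^sup>* (\<phi> \<circ> h) (\<phi> \<circ> h')"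
    by (rule rtranclp_map[where r = "contiguous K K" and F = "\<lambda>h. \<phi> \<circ> h"])
      (use assms in \<open>simp_all add: contiguity_class_def contiguous_comp_left\<close>)
  with assms show ?thesis
    by (auto simp: contiguity_class_def intro: simplicial_map_comp)
qed

lemma contiguity_class_comp_right:
  assumes "contiguity_class K' K' h h'" and "simplicial_map K K' \<phi>"
  shows "contiguity_class K K' (h \<circ> \<phi>) (h' \<circ> \<phi>)"
proof -
  have "(contiguous K K')\<^sup>*\<^sup>* (h \<circ> \<phi>) (h' \<circ> \<phi>)"
    by (rule rtranclp_map[where r = "contiguous K' K'" and F = "\<lambda>h. h \<circ> \<phi>"])
      (use assms in \<open>simp_all add: contiguity_class_def contiguous_comp_right\<close>)
  with assms show ?thesis
    by (auto simp: contiguity_class_def intro: simplicial_map_comp)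
qed

lemma contiguity_class_eq_on_vertices:
  assumes "simplicial_map K K' f" and "\<And>x. x \<in> vertices K \<Longrightarrow> f x = g x"
  shows "contiguity_class K K' f g"
  using assms contiguous_eq_on_vertices[OF assms]
  by (simp add: contiguity_class_def r_into_rtranclp)

lemma contiguity_class_const:
  assumes "simplicial_complex K" "simplicial_complex K'" "edge_path_connected K'"
    and "a \<in> vertices K'" "b \<in> vertices K'"
  shows "contiguity_class K K' (\<lambda>_. a) (\<lambda>_. b)"
proof -
  have path: "(\<lambda>x y. {x, y} \<in> K')\<^sup>*\<^sup>* a b"
    using assms(3-5) by (simp add: edge_path_connected_def)
  have "(contiguous K K')\<^sup>*\<^sup>* (\<lambda>_. a) (\<lambda>_. b)"
    by (rule rtranclp_map[where r = "\<lambda>x y. {x, y} \<in> K'" and F = "\<lambda>c _. c"])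
      (simp_all add: contiguous_const assms(1,2) path)
  moreover have "simplicial_map K K' (\<lambda>_. a)"
    using assms by (simp add: simplicial_map_const simplicial_complex_vertex_simplex)
  ultimately show ?thesis
    by (simp add: contiguity_class_def)
qed

lemma contiguity_class_const_if_strongly_collapsible_domain:
  fixes K :: "'a set set"
  assumes "strongly_collapsible K" and "simplicial_map K K' \<phi>"
  obtains c where "c \<in> vertices K'" and "contiguity_class K K' \<phi> (\<lambda>_. c)"
proof -
  obtain v :: 'a and f g where f: "simplicial_map K {{v}} f" and g: "simplicial_map {{v}} K g"
    and gf: "contiguity_class K K (g \<circ> f) id"
    using assms(1) by (auto simp: strongly_collapsible_def)
  have "g v \<in> vertices K"
    using g by (rule simplicial_map_vertices) (simp add: vertices_def)
  then have c: "\<phi> (g v) \<in> vertices K'"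
    using assms(2) by (rule simplicial_map_vertices[rotated])
  have "contiguity_class K K' \<phi> (\<phi> \<circ> (g \<circ> f))"
    using contiguity_class_sym[OF contiguity_class_comp_left[OF gf assms(2)]] by simp
  also have "contiguity_class K K' (\<phi> \<circ> (g \<circ> f)) (\<lambda>_. \<phi> (g v))"
  proof (rule contiguity_class_eq_on_vertices)
    show "simplicial_map K K' (\<phi> \<circ> (g \<circ> f))"
      by (rule simplicial_map_comp[OF simplicial_map_comp[OF f g] assms(2)])
    show "(\<phi> \<circ> (g \<circ> f)) x = \<phi> (g v)" if "x \<in> vertices K" for x
      using simplicial_map_to_point[OF f that] by simp
  qed
  finally show ?thesis
    using c that by blast
qed

lemma contiguity_class_const_if_strongly_collapsible_codomain:
  fixes K' :: "'b set set"
  assumes "strongly_collapsible K'" and "simplicial_map K K' \<phi>"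
  obtains c where "c \<in> vertices K'" and "contiguity_class K K' \<phi> (\<lambda>_. c)"
proof -
  obtain v :: 'b and f g where f: "simplicial_map K' {{v}} f" and g: "simplicial_map {{v}} K' g"
    and gf: "contiguity_class K' K' (g \<circ> f) id"
    using assms(1) by (auto simp: strongly_collapsible_def)
  have c: "g v \<in> vertices K'"
    using g by (rule simplicial_map_vertices) (simp add: vertices_def)
  have "contiguity_class K K' \<phi> ((g \<circ> f) \<circ> \<phi>)"
    using contiguity_class_sym[OF contiguity_class_comp_right[OF gf assms(2)]] by simp
  also have "contiguity_class K K' ((g \<circ> f) \<circ> \<phi>) (\<lambda>_. g v)"
  proof (rule contiguity_class_eq_on_vertices)
    show "simplicial_map K K' ((g \<circ> f) \<circ> \<phi>)"
      by (rule simplicial_map_comp[OF assms(2) simplicial_map_comp[OF f g]])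
    show "((g \<circ> f) \<circ> \<phi>) x = g v" if "x \<in> vertices K" for x
      using simplicial_map_to_point[OF f simplicial_map_vertices[OF assms(2) that]] by simp
  qed
  finally show ?thesis
    using c that by blast
qed

lemma SD_cover_contiguity_class_cong:
  assumes "\<forall>i\<in>{1..m}. contiguity_class K K' (\<phi> i) (\<phi>' i)" and "SD_cover K K' m \<phi> n"
  shows "SD_cover K K' m \<phi>' n"
proof -
  obtain Ks where Ks: "\<forall>k\<le>n. subcomplex (Ks k) K" "K = (\<Union>k\<le>n. Ks k)"
    and cover: "\<forall>i\<in>{1..m}. \<forall>j\<in>{1..m}. \<forall>k\<le>n. contiguity_class (Ks k) K' (\<phi> i) (\<phi> j)"
    using assms(2) by (auto simp: SD_cover_def)
  have "contiguity_class (Ks k) K' (\<phi>' i) (\<phi>' j)"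
    if "i \<in> {1..m}" "j \<in> {1..m}" "k \<le> n" for i j k
  proof -
    have sub: "Ks k \<subseteq> K"
      using Ks(1) that(3) by (simp add: subcomplex_def)
    have "contiguity_class (Ks k) K' (\<phi>' i) (\<phi> i)"
      using assms(1) that(1) sub by (blast intro: contiguity_class_subcomplex contiguity_class_sym)
    also have "contiguity_class (Ks k) K' (\<phi> i) (\<phi> j)"
      using cover that by blast
    also have "contiguity_class (Ks k) K' (\<phi> j) (\<phi>' j)"
      using assms(1) that(2) sub by (blast intro: contiguity_class_subcomplex)
    finally show ?thesis .
  qed
  with Ks show ?thesis
    by (auto simp: SD_cover_def)
qed

lemma SD_contiguity_class_cong:
  assumes "\<forall>i\<in>{1..m}. contiguity_class K K' (\<phi> i) (\<phi>' i)"
  shows "SD K K' m \<phi> = SD K K' m \<phi>'"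
proof -
  have "\<forall>i\<in>{1..m}. contiguity_class K K' (\<phi>' i) (\<phi> i)"
    using assms by (simp add: contiguity_class_sym)
  with assms have "SD_cover K K' m \<phi> = SD_cover K K' m \<phi>'"
    by (blast intro: SD_cover_contiguity_class_cong)
  then show ?thesis
    by (simp add: SD_def)
qed

lemma SD_eq_0_if_contiguity_class:
  assumes "simplicial_complex K"
    and "\<forall>i\<in>{1..m}. \<forall>j\<in>{1..m}. contiguity_class K K' (\<phi> i) (\<phi> j)"
  shows "SD K K' m \<phi> = 0"
proof -
  have "SD_cover K K' m \<phi> 0"
    using assms unfolding SD_cover_def subcomplex_def
    by (intro exI[of _ "\<lambda>_. K"]) simp
  then show ?thesis
    by (auto simp: SD_def zero_enat_def)
qed

theorem proposition3p5:
  fixes L :: "'a set set" and L' :: "'b set set" and m :: nat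
    and \<phi> \<phi>' :: "nat \<Rightarrow> 'a \<Rightarrow> 'b"
  assumes "simplicial_complex L" and "simplicial_complex L'"
    and "edge_path_connected L" and "edge_path_connected L'"
  shows "((\<forall>i\<in>{1..m}. simplicial_map L L' (\<phi> i) \<and> simplicial_map L L' (\<phi>' i) \<and>
            contiguity_class L L' (\<phi> i) (\<phi>' i))
          \<longrightarrow> SD L L' m \<phi> = SD L L' m \<phi>')
       \<and> ((\<forall>i\<in>{1..m}. simplicial_map L L' (\<phi> i)) \<and>
            (strongly_collapsible L \<or> strongly_collapsible L')
          \<longrightarrow> SD L L' m \<phi> = 0)"
proof (intro conjI impI)
  show "SD L L' m \<phi> = SD L L' m \<phi>'"
    if "\<forall>i\<in>{1..m}. simplicial_map L L' (\<phi> i) \<and> simplicial_map L L' (\<phi>' i) \<and>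
          contiguity_class L L' (\<phi> i) (\<phi>' i)"
    using that by (simp add: SD_contiguity_class_cong)
next
  assume maps: "(\<forall>i\<in>{1..m}. simplicial_map L L' (\<phi> i)) \<and>
    (strongly_collapsible L \<or> strongly_collapsible L')"
  have "\<exists>c\<in>vertices L'. contiguity_class L L' (\<phi> i) (\<lambda>_. c)" if "i \<in> {1..m}" for i
    using maps that contiguity_class_const_if_strongly_collapsible_domain
      contiguity_class_const_if_strongly_collapsible_codomain by metis
  then have "contiguity_class L L' (\<phi> i) (\<phi> j)" if "i \<in> {1..m}" "j \<in> {1..m}" for i j
    using that contiguity_class_const[OF assms(1,2,4)]
    by (meson contiguity_class_sym contiguity_class_trans)
  then show "SD L L' m \<phi> = 0"
    using assms(1) by (simp add: SD_eq_0_if_contiguity_class)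
qed

end
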